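(* Let $u,v,p,q,r>1$ satisfy $\frac1u+\frac1v=1$ and $\frac1{u(p-1)}+\frac1{v(q-1)}=\frac1{r-1}$, let $p',q',r'$ be the conjugate exponents of $p,q,r$, and put $\alpha=\frac{q'}{v\sqrt{p'q'r'}}$, $\beta=\frac{r'}{\sqrt{p'q'r'}}$, $\gamma=\frac{p'}{u\sqrt{p'q'r'}}$. Then for all $s,t>0$, $$\frac{p^{1/p}q^{1/q}}{r^{1/r}}\cdot\frac{s^{1/p}t^{1/q}}{(s+t+\beta^2)^{1/r'}(\gamma^2s+\alpha^2t+st)^{1/r}}\le v^{\frac1r-\frac1p}u^{\frac1r-\frac1q},$$ with equality if and only if $s=\frac1{pv}$ and $t=\frac1{qu}$. In particular the supremum over $s,t>0$ of the left-hand side equals $v^{\frac1r-\frac1p}u^{\frac1r-\frac1q}$. *)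

theory Defs
  imports Complex_Main
begin

definition conj_exp :: "real \<Rightarrow> real" where
  "conj_exp p = p / (p - 1)"

definition lhsF :: "real \<Rightarrow> real \<Rightarrow> real \<Rightarrow> real \<Rightarrow> real \<Rightarrow> real \<Rightarrow> real \<Rightarrow> real" where
  "lhsF u v p q r s t =
     (let p' = conj_exp p; q' = conj_exp q; r' = conj_exp r;
          N = sqrt (p' * q' * r');
          \<alpha> = q' / (v * N); \<beta> = r' / N; \<gamma> = p' / (u * N)
      in (p powr (1/p) * q powr (1/q) / r powr (1/r)) *
         (s powr (1/p) * t powr (1/q) /
          ((s + t + \<beta>^2) powr (1/r') * (\<gamma>^2 * s + \<alpha>^2 * t + s * t) powr (1/r))))"

end

theory Submission
  imports Defs
begin

text \<open>
  Write \<open>P = p'\<close>, \<open>Q = q'\<close>, \<open>R = r'\<close> and \<open>x = 1/u\<close>, so \<open>1/v = 1 - x\<close>;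
  the hypothesis on \<open>p, q, r\<close> becomes \<open>R = P x + Q (1 - x)\<close>.  Taking logarithms, the
  left-hand side is a constant plus
    \<open>(1/p) ln s + (1/q) ln t - (1/R) ln (s + t + \<beta>\<^sup>2) - (1/r) ln (\<gamma>\<^sup>2 s + \<alpha>\<^sup>2 t + s t)\<close>.
  At \<open>s0 = 1/(p v)\<close>, \<open>t0 = 1/(q u)\<close> one has \<open>s0 + t0 + \<beta>\<^sup>2 = 1\<close>, so weighted AM--GM bounds
  \<open>ln (s + t + \<beta>\<^sup>2)\<close> from below by an affine function of \<open>ln s, ln t\<close>, and a second
  AM--GM does the same for the bilinear term.  The exponents \<open>1/p, 1/q\<close> are exactly
  the resulting combinations, so the logarithmic terms cancel, giving a strict maximum
  at \<open>(s0, t0)\<close> (strictness from the first AM--GM).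
\<close>

text \<open>Proof: weight the tangent-line bounds
  \<open>ln z - ln m \<le> (z - m)/m\<close> at the weighted mean \<open>m\<close>; they are strict unless \<open>z = m\<close>.\<close>
lemma weighted_ln_mean_le:
  fixes w1 w2 w3 z1 z2 z3 :: real
  assumes w: "w1 > 0" "w2 > 0" "w3 > 0" "w1 + w2 + w3 = 1"
    and z: "z1 > 0" "z2 > 0" "z3 > 0"
  shows "w1 * ln z1 + w2 * ln z2 + w3 * ln z3 \<le> ln (w1 * z1 + w2 * z2 + w3 * z3)"
    and "w1 * ln z1 + w2 * ln z2 + w3 * ln z3 = ln (w1 * z1 + w2 * z2 + w3 * z3)
           \<Longrightarrow> z1 = z2 \<and> z2 = z3"
proof -
  define m where "m = w1 * z1 + w2 * z2 + w3 * z3"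
  have m: "m > 0" unfolding m_def using w z by (simp add: add_pos_pos)
  define gap where "gap z = (z - m) / m - (ln z - ln m)" for z
  have gap_nonneg: "gap z \<ge> 0" if "z > 0" for z
    using ln_diff_le[OF that m] by (simp add: gap_def)
  have gap_pos: "gap z > 0" if "z > 0" "z \<noteq> m" for z
    using ln_diff_less[OF that(1) m that(2)] by (simp add: gap_def)
  have "w1 * gap z1 + w2 * gap z2 + w3 * gap z3
        = (w1 * z1 + w2 * z2 + w3 * z3) / m - (w1 + w2 + w3)
          + (w1 + w2 + w3) * ln m - (w1 * ln z1 + w2 * ln z2 + w3 * ln z3)"
    using m by (simp add: gap_def diff_divide_distrib add_divide_distrib algebra_simps)
  also have "\<dots> = ln m - (w1 * ln z1 + w2 * ln z2 + w3 * ln z3)"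
    using m w(4) by (simp add: m_def)
  finally have gap_sum: "w1 * gap z1 + w2 * gap z2 + w3 * gap z3
                         = ln m - (w1 * ln z1 + w2 * ln z2 + w3 * ln z3)" .
  have terms: "w1 * gap z1 \<ge> 0" "w2 * gap z2 \<ge> 0" "w3 * gap z3 \<ge> 0"
    using w z gap_nonneg by simp_all
  show "w1 * ln z1 + w2 * ln z2 + w3 * ln z3 \<le> ln (w1 * z1 + w2 * z2 + w3 * z3)"
    using gap_sum terms unfolding m_def by linarith
  assume "w1 * ln z1 + w2 * ln z2 + w3 * ln z3 = ln (w1 * z1 + w2 * z2 + w3 * z3)"
  then have "w1 * gap z1 = 0 \<and> w2 * gap z2 = 0 \<and> w3 * gap z3 = 0"
    using gap_sum terms unfolding m_def by linarith
  then have "z1 = m \<and> z2 = m \<and> z3 = m"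
    using w z gap_pos by (metis less_irrefl mult_pos_pos)
  then show "z1 = z2 \<and> z2 = z3" by simp
qed

text \<open>First application of AM--GM: if \<open>s0 + t0 + B = 1\<close>, write \<open>s + t + B\<close> as the
  weighted mean of \<open>s/s0\<close>, \<open>t/t0\<close>, \<open>1\<close>; equality forces \<open>(s, t) = (s0, t0)\<close>.\<close>
lemma ln_affine_mean_bound:
  fixes s0 t0 B s t :: real
  assumes pos: "s0 > 0" "t0 > 0" "B > 0" and sum: "s0 + t0 + B = 1"
    and st: "s > 0" "t > 0"
  shows "s0 * (ln s - ln s0) + t0 * (ln t - ln t0) \<le> ln (s + t + B)"
    and "s0 * (ln s - ln s0) + t0 * (ln t - ln t0) = ln (s + t + B) \<Longrightarrow> s = s0 \<and> t = t0"
proof -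
  have z: "s / s0 > 0" "t / t0 > 0" using pos st by simp_all
  have mean: "s0 * (s / s0) + t0 * (t / t0) + B * 1 = s + t + B" using pos by simp
  have logs: "s0 * ln (s / s0) + t0 * ln (t / t0) + B * ln 1
              = s0 * (ln s - ln s0) + t0 * (ln t - ln t0)"
    using pos st by (simp add: ln_div)
  note amgm = weighted_ln_mean_le[OF pos sum z zero_less_one, unfolded mean logs]
  show "s0 * (ln s - ln s0) + t0 * (ln t - ln t0) \<le> ln (s + t + B)" by (rule amgm(1))
  assume "s0 * (ln s - ln s0) + t0 * (ln t - ln t0) = ln (s + t + B)"
  then have "s / s0 = 1 \<and> t / t0 = 1" using amgm(2) by simp
  then show "s = s0 \<and> t = t0" using pos by simp
qed

text \<open>Second application: with \<open>M = G s0 + A t0 + s0 t0\<close>, the quantity \<open>G s + A t + s t\<close>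
  is the mean of \<open>M s/s0\<close>, \<open>M t/t0\<close>, \<open>M s t/(s0 t0)\<close> with weights
  \<open>G s0/M\<close>, \<open>A t0/M\<close>, \<open>s0 t0/M\<close>.\<close>
lemma ln_bilinear_mean_bound:
  fixes G A s0 t0 M s t :: real
  assumes pos: "G > 0" "A > 0" "s0 > 0" "t0 > 0" and M: "M = G * s0 + A * t0 + s0 * t0"
    and st: "s > 0" "t > 0"
  shows "ln M + (G * s0 + s0 * t0) / M * (ln s - ln s0) + (A * t0 + s0 * t0) / M * (ln t - ln t0)
         \<le> ln (G * s + A * t + s * t)"
proof -
  have Mpos: "M > 0" unfolding M using pos by (simp add: add_pos_pos)
  define w1 w2 w3 where "w1 = G * s0 / M" and "w2 = A * t0 / M" and "w3 = s0 * t0 / M"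
  have w: "w1 > 0" "w2 > 0" "w3 > 0" "w1 + w2 + w3 = 1"
    using pos Mpos unfolding w1_def w2_def w3_def M by (simp_all add: add_divide_distrib[symmetric])
  have z: "M * s / s0 > 0" "M * t / t0 > 0" "M * s * t / (s0 * t0) > 0"
    using pos st Mpos by simp_all
  have mean: "w1 * (M * s / s0) + w2 * (M * t / t0) + w3 * (M * s * t / (s0 * t0)) = G * s + A * t + s * t"
    unfolding w1_def w2_def w3_def using pos Mpos by (simp add: field_simps)
  have "w1 * ln (M * s / s0) + w2 * ln (M * t / t0) + w3 * ln (M * s * t / (s0 * t0))
        = (w1 + w2 + w3) * ln M + (w1 + w3) * (ln s - ln s0) + (w2 + w3) * (ln t - ln t0)"
    using pos st Mpos by (simp add: ln_mult ln_div algebra_simps)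
  also have "\<dots> = ln M + (G * s0 + s0 * t0) / M * (ln s - ln s0) + (A * t0 + s0 * t0) / M * (ln t - ln t0)"
    unfolding w(4) unfolding w1_def w2_def w3_def by (simp add: add_divide_distrib)
  finally show ?thesis using weighted_ln_mean_le(1)[OF w z] unfolding mean by simp
qed

definition log_profile :: "real \<Rightarrow> real \<Rightarrow> real \<Rightarrow> real \<Rightarrow> real \<Rightarrow> real \<Rightarrow> real \<Rightarrow> real \<Rightarrow> real \<Rightarrow> real"
  where "log_profile e1 e2 a b B G A s t =
           e1 * ln s + e2 * ln t - a * ln (s + t + B) - b * ln (G * s + A * t + s * t)"

text \<open>If the exponents \<open>e1, e2\<close> are exactly the combinations of the
  AM--GM exponents dictated by the two bounds above, then the log-profile has a strict
  global maximum at \<open>(s0, t0)\<close>: the difference to the maximum is \<open>-a D1 - b D2\<close>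
  with both AM--GM defects \<open>D1, D2\<close> nonnegative and \<open>D1 = 0\<close> only at \<open>(s0, t0)\<close>.\<close>
lemma log_profile_strict_max:
  fixes e1 e2 a b B G A s0 t0 M s t :: real
  assumes pos: "s0 > 0" "t0 > 0" "B > 0" "G > 0" "A > 0" "a > 0" "b \<ge> 0"
    and sum: "s0 + t0 + B = 1" and M: "M = G * s0 + A * t0 + s0 * t0"
    and e1: "e1 = a * s0 + b * (G * s0 + s0 * t0) / M"
    and e2: "e2 = a * t0 + b * (A * t0 + s0 * t0) / M"
    and st: "s > 0" "t > 0"
  shows "log_profile e1 e2 a b B G A s t \<le> log_profile e1 e2 a b B G A s0 t0"
    and "log_profile e1 e2 a b B G A s t = log_profile e1 e2 a b B G A s0 t0 \<Longrightarrow> s = s0 \<and> t = t0"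
proof -
  define Ls Lt where "Ls = ln s - ln s0" and "Lt = ln t - ln t0"
  define D1 where "D1 = ln (s + t + B) - (s0 * Ls + t0 * Lt)"
  define D2 where "D2 = ln (G * s + A * t + s * t)
                         - (ln M + (G * s0 + s0 * t0) / M * Ls + (A * t0 + s0 * t0) / M * Lt)"
  have D1: "D1 \<ge> 0" "D1 = 0 \<Longrightarrow> s = s0 \<and> t = t0"
    using ln_affine_mean_bound[OF pos(1-3) sum st] unfolding D1_def Ls_def Lt_def by simp_all
  have D2: "D2 \<ge> 0"
    using ln_bilinear_mean_bound[OF pos(4,5,1,2) M st] unfolding D2_def Ls_def Lt_def by simp
  have "log_profile e1 e2 a b B G A s t - log_profile e1 e2 a b B G A s0 t0
        = e1 * Ls + e2 * Lt - a * ln (s + t + B) - b * (ln (G * s + A * t + s * t) - ln M)"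
    using sum by (simp add: log_profile_def Ls_def Lt_def M algebra_simps)
  also have "\<dots> = - a * D1 - b * D2"
    unfolding D1_def D2_def e1 e2 by (simp add: algebra_simps)
  finally have diff: "log_profile e1 e2 a b B G A s t - log_profile e1 e2 a b B G A s0 t0 = - a * D1 - b * D2" .
  have "a * D1 \<ge> 0" "b * D2 \<ge> 0" using pos D1(1) D2 by simp_all
  then show "log_profile e1 e2 a b B G A s t \<le> log_profile e1 e2 a b B G A s0 t0"
    using diff by linarith
  assume "log_profile e1 e2 a b B G A s t = log_profile e1 e2 a b B G A s0 t0"
  with diff \<open>a * D1 \<ge> 0\<close> \<open>b * D2 \<ge> 0\<close> have "a * D1 = 0" by linarith
  then show "s = s0 \<and> t = t0" using pos(6) D1(2) by simp
qed

text \<open>The algebraic heart of the theorem, in the variables \<open>P = p'\<close>, \<open>Q = q'\<close>,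
  \<open>x = 1/u\<close> with \<open>R = P x + Q (1 - x)\<close>: the candidate maximiser satisfies the
  normalisation and the exponent identities required by \<open>log_profile_strict_max\<close>.\<close>
lemma critical_point_identities:
  fixes P Q R x :: real
  assumes P: "P > 1" and Q: "Q > 1" and x: "0 < x" "x < 1" and R: "R = P * x + Q * (1 - x)"
  defines "s0 \<equiv> (P - 1) * (1 - x) / P" and "t0 \<equiv> (Q - 1) * x / Q"
    and "B \<equiv> R / (P * Q)" and "G \<equiv> P * x^2 / (Q * R)" and "A \<equiv> Q * (1 - x)^2 / (P * R)"
  shows "s0 + t0 + B = 1"
    and "G * s0 + A * t0 + s0 * t0 = x * (1 - x) * (R - 1) / R"
    and "(P - 1) / P = s0 / R + (G * s0 + s0 * t0) / (x * (1 - x))"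
    and "(Q - 1) / Q = t0 / R + (A * t0 + s0 * t0) / (x * (1 - x))"
proof -
  have "R - 1 = P * x + Q * (1 - x) - 1" using R by simp
  also have "\<dots> = x * (P - 1) + (1 - x) * (Q - 1)" by (simp add: algebra_simps)
  also have "\<dots> > 0" using P Q x by (simp add: add_pos_pos)
  finally have R1: "R > 1" by simp
  show "s0 + t0 + B = 1"
    unfolding s0_def t0_def B_def using P Q R by (simp add: field_simps)
  show "G * s0 + A * t0 + s0 * t0 = x * (1 - x) * (R - 1) / R"
    unfolding s0_def t0_def G_def A_def using P Q R R1 x
    by (simp add: field_simps power2_eq_square) algebra
  show "(P - 1) / P = s0 / R + (G * s0 + s0 * t0) / (x * (1 - x))"
    unfolding s0_def t0_def G_def using P Q R R1 x
    by (simp add: field_simps power2_eq_square) algebra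
  show "(Q - 1) / Q = t0 / R + (A * t0 + s0 * t0) / (x * (1 - x))"
    unfolding s0_def t0_def A_def using P Q R R1 x
    by (simp add: field_simps power2_eq_square) algebra
qed

lemma conj_exp_gt_1:
  fixes p :: real
  assumes "p > 1"
  shows "conj_exp p > 1" and "conj_exp p - 1 = 1 / (p - 1)" and "1 / p = (conj_exp p - 1) / conj_exp p"
  using assms by (auto simp: conj_exp_def field_simps)

lemma lhsF_as_log_profile:
  fixes u v p q r s t :: real
  assumes "u > 0" "v > 0" "p > 1" "q > 1" "r > 1" "s > 0" "t > 0"
  defines "P \<equiv> conj_exp p" and "Q \<equiv> conj_exp q" and "R \<equiv> conj_exp r"
  shows "lhsF u v p q r s t = p powr (1/p) * q powr (1/q) / r powr (1/r) *
           exp (log_profile (1/p) (1/q) (1/R) (1/r)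
                  (R / (P * Q)) (P / (u^2 * Q * R)) (Q / (v^2 * P * R)) s t)"
proof -
  have pos: "P > 0" "Q > 0" "R > 0"
    using conj_exp_gt_1(1) assms(3-5) unfolding P_def Q_def R_def by fastforce+
  have N: "(sqrt (P * Q * R))^2 = P * Q * R" using pos by simp
  have beta: "(R / sqrt (P * Q * R))^2 = R / (P * Q)"
    using pos by (simp add: power_divide N power2_eq_square)
  have gamma: "(P / (u * sqrt (P * Q * R)))^2 = P / (u^2 * Q * R)"
    using pos assms(1) by (simp add: power_divide power_mult_distrib N) (simp add: power2_eq_square)
  have alpha: "(Q / (v * sqrt (P * Q * R)))^2 = Q / (v^2 * P * R)"
    using pos assms(2) by (simp add: power_divide power_mult_distrib N) (simp add: power2_eq_square)
  have S: "s + t + R / (P * Q) > 0" "P / (u^2 * Q * R) * s + Q / (v^2 * P * R) * t + s * t > 0"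
    using pos assms by (simp_all add: add_pos_pos)
  show ?thesis
    unfolding lhsF_def Let_def P_def[symmetric] Q_def[symmetric] R_def[symmetric] beta gamma alpha
    using assms(6,7) S by (simp add: log_profile_def powr_def exp_add exp_diff)
qed

text \<open>The identities of \<open>critical_point_identities\<close> in the original parameters:
  the hypothesis on \<open>p, q, r\<close> says precisely \<open>r' = p'/u + q'/v\<close>, and the maximiser is
  \<open>s0 = 1/(p v)\<close>, \<open>t0 = 1/(q u)\<close>, where \<open>\<gamma>\<^sup>2 s0 + \<alpha>\<^sup>2 t0 + s0 t0 = 1/(r u v)\<close>.\<close>
lemma critical_point_data:
  fixes u v p q r P Q R :: real
  assumes "u > 1" "v > 1" "p > 1" "q > 1" "r > 1"
    and uv: "1/u + 1/v = 1"
    and pqr: "1/(u*(p-1)) + 1/(v*(q-1)) = 1/(r-1)"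
    and P_def: "P = conj_exp p" and Q_def: "Q = conj_exp q" and R_def: "R = conj_exp r"
  defines "s0 \<equiv> 1/(p*v)" and "t0 \<equiv> 1/(q*u)"
    and "B \<equiv> R / (P * Q)" and "G \<equiv> P / (u^2 * Q * R)" and "A \<equiv> Q / (v^2 * P * R)"
  shows "s0 + t0 + B = 1"
    and "G * s0 + A * t0 + s0 * t0 = 1/(r*u*v)"
    and "1/p = 1/R * s0 + 1/r * (G * s0 + s0 * t0) / (1/(r*u*v))"
    and "1/q = 1/R * t0 + 1/r * (A * t0 + s0 * t0) / (1/(r*u*v))"
proof -
  define x where "x = 1/u"
  have x: "0 < x" "x < 1" using assms(1) unfolding x_def by auto
  have v_x: "1/v = 1 - x" using uv unfolding x_def by simp
  note P = conj_exp_gt_1[OF assms(3), folded P_def]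
  note Q = conj_exp_gt_1[OF assms(4), folded Q_def]
  note R = conj_exp_gt_1[OF assms(5), folded R_def]
  have "x * (P - 1) = 1/(u*(p-1))" unfolding x_def P(2) by simp
  moreover have "(1 - x) * (Q - 1) = 1/(v*(q-1))" unfolding v_x[symmetric] Q(2) by simp
  ultimately have "R - 1 = x * (P - 1) + (1 - x) * (Q - 1)" using pqr R(2) by simp
  then have R_mean: "R = P * x + Q * (1 - x)" by (simp add: algebra_simps)
  note ids = critical_point_identities[OF P(1) Q(1) x R_mean]
  have "s0 = 1/p * (1/v)" "t0 = 1/q * (1/u)" unfolding s0_def t0_def by simp_all
  then have s0: "s0 = (P - 1) * (1 - x) / P" and t0: "t0 = (Q - 1) * x / Q"
    unfolding P(3) Q(3) v_x x_def[symmetric] by simp_all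
  have G: "G = P * x^2 / (Q * R)" unfolding G_def x_def by (simp add: power_divide)
  have A: "A = Q * (1 - x)^2 / (P * R)" unfolding A_def v_x[symmetric] by (simp add: power_divide)
  have "1/(r*u*v) = 1/r * (1/u) * (1/v)" by simp
  then have M: "x * (1 - x) * (R - 1) / R = 1/(r*u*v)"
    unfolding R(3) v_x x_def[symmetric] by simp
  have "x * (1 - x) = 1/(u*v)" unfolding v_x[symmetric] by (simp add: x_def)
  then have weight: "1/r * X / (1/(r*u*v)) = X / (x * (1 - x))" for X
    using assms(1,2,5) by simp
  show "s0 + t0 + B = 1" using ids(1) unfolding s0 t0 B_def .
  show "G * s0 + A * t0 + s0 * t0 = 1/(r*u*v)" using ids(2) unfolding s0 t0 G A M .
  show "1/p = 1/R * s0 + 1/r * (G * s0 + s0 * t0) / (1/(r*u*v))"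
    using ids(3) unfolding weight P(3)[symmetric] s0 t0 G by simp
  show "1/q = 1/R * t0 + 1/r * (A * t0 + s0 * t0) / (1/(r*u*v))"
    using ids(4) unfolding weight Q(3)[symmetric] s0 t0 A by simp
qed

lemma lhsF_strict_max:
  fixes u v p q r s t :: real
  assumes hyps: "u > 1" "v > 1" "p > 1" "q > 1" "r > 1"
      "1/u + 1/v = 1" "1/(u*(p-1)) + 1/(v*(q-1)) = 1/(r-1)"
    and st: "s > 0" "t > 0"
  shows "lhsF u v p q r s t \<le> lhsF u v p q r (1/(p*v)) (1/(q*u))"
    and "lhsF u v p q r s t = lhsF u v p q r (1/(p*v)) (1/(q*u)) \<Longrightarrow> s = 1/(p*v) \<and> t = 1/(q*u)"
proof -
  define P Q R where "P = conj_exp p" and "Q = conj_exp q" and "R = conj_exp r"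
  define s0 t0 where "s0 = 1/(p*v)" and "t0 = 1/(q*u)"
  define B G A where "B = R / (P * Q)" and "G = P / (u^2 * Q * R)" and "A = Q / (v^2 * P * R)"
  define K where "K = p powr (1/p) * q powr (1/q) / r powr (1/r)"
  define \<phi> where "\<phi> = log_profile (1/p) (1/q) (1/R) (1/r) B G A"
  have lhs: "lhsF u v p q r s' t' = K * exp (\<phi> s' t')" if "s' > 0" "t' > 0" for s' t'
    using lhsF_as_log_profile[of u v p q r s' t'] hyps that
    unfolding K_def \<phi>_def B_def G_def A_def P_def Q_def R_def by simp
  note data = critical_point_data[OF hyps P_def Q_def R_def, folded s0_def t0_def B_def G_def A_def]
  have PQR: "P > 0" "Q > 0" "R > 0"
    using conj_exp_gt_1(1) hyps(3-5) unfolding P_def Q_def R_def by fastforce+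
  have pos: "s0 > 0" "t0 > 0" "B > 0" "G > 0" "A > 0" "1/R > 0" "1/r \<ge> 0"
    using hyps PQR unfolding s0_def t0_def B_def G_def A_def by simp_all
  note max = log_profile_strict_max[OF pos data(1) data(2)[symmetric] data(3,4) st, folded \<phi>_def]
  have K: "K > 0" unfolding K_def using hyps by simp
  show "lhsF u v p q r s t \<le> lhsF u v p q r s0 t0"
    unfolding lhs[OF st] lhs[OF pos(1,2)] using max(1) K by simp
  assume "lhsF u v p q r s t = lhsF u v p q r s0 t0"
  then have "\<phi> s t = \<phi> s0 t0" unfolding lhs[OF st] lhs[OF pos(1,2)] using K by simp
  then show "s = s0 \<and> t = t0" by (rule max(2))
qed

lemma lhsF_critical_value:
  fixes u v p q r :: real
  assumes hyps: "u > 1" "v > 1" "p > 1" "q > 1" "r > 1"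
      "1/u + 1/v = 1" "1/(u*(p-1)) + 1/(v*(q-1)) = 1/(r-1)"
  shows "lhsF u v p q r (1/(p*v)) (1/(q*u)) = v powr (1/r - 1/p) * u powr (1/r - 1/q)"
proof -
  define P Q R where "P = conj_exp p" and "Q = conj_exp q" and "R = conj_exp r"
  define s0 t0 where "s0 = 1/(p*v)" and "t0 = 1/(q*u)"
  define B G A where "B = R / (P * Q)" and "G = P / (u^2 * Q * R)" and "A = Q / (v^2 * P * R)"
  note data = critical_point_data[OF hyps P_def Q_def R_def, folded s0_def t0_def B_def G_def A_def]
  have st: "s0 > 0" "t0 > 0" using hyps unfolding s0_def t0_def by simp_all
  have "ln (p powr (1/p) * q powr (1/q) / r powr (1/r))
          + log_profile (1/p) (1/q) (1/R) (1/r) B G A s0 t0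
        = (1/p) * (ln p - ln (p*v)) + (1/q) * (ln q - ln (q*u)) + (1/r) * (ln (r*u*v) - ln r)"
    unfolding log_profile_def data(1,2) using hyps
    by (simp add: ln_mult ln_div ln_powr s0_def t0_def algebra_simps)
  also have "\<dots> = ln (v powr (1/r - 1/p) * u powr (1/r - 1/q))"
    using hyps by (simp add: ln_mult ln_powr algebra_simps)
  finally have log_value: "ln (p powr (1/p) * q powr (1/q) / r powr (1/r))
          + log_profile (1/p) (1/q) (1/R) (1/r) B G A s0 t0
        = ln (v powr (1/r - 1/p) * u powr (1/r - 1/q))" .
  have "lhsF u v p q r s0 t0 = p powr (1/p) * q powr (1/q) / r powr (1/r)
          * exp (log_profile (1/p) (1/q) (1/R) (1/r) B G A s0 t0)"
    using lhsF_as_log_profile[of u v p q r s0 t0] hyps st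
    unfolding B_def G_def A_def P_def Q_def R_def by simp
  also have "\<dots> = exp (ln (p powr (1/p) * q powr (1/q) / r powr (1/r))
                      + log_profile (1/p) (1/q) (1/R) (1/r) B G A s0 t0)"
    using hyps by (simp add: exp_add)
  also have "\<dots> = v powr (1/r - 1/p) * u powr (1/r - 1/q)"
    unfolding log_value using hyps by simp
  finally show ?thesis unfolding s0_def t0_def .
qed

theorem mainTheorem10:
  fixes u v p q r :: real
  assumes "u > 1" "v > 1" "p > 1" "q > 1" "r > 1"
    and "1/u + 1/v = 1"
    and "1/(u*(p-1)) + 1/(v*(q-1)) = 1/(r-1)"
  shows "(\<forall>s t. s > 0 \<longrightarrow> t > 0 \<longrightarrow>
            lhsF u v p q r s t \<le> v powr (1/r - 1/p) * u powr (1/r - 1/q)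
          \<and> (lhsF u v p q r s t = v powr (1/r - 1/p) * u powr (1/r - 1/q)
               \<longleftrightarrow> s = 1/(p*v) \<and> t = 1/(q*u)))
       \<and> (SUP st \<in> {st :: real \<times> real. fst st > 0 \<and> snd st > 0}.
             lhsF u v p q r (fst st) (snd st))
         = v powr (1/r - 1/p) * u powr (1/r - 1/q)"
proof -
  define f where "f = lhsF u v p q r"
  define s0 t0 where "s0 = 1/(p*v)" and "t0 = 1/(q*u)"
  have max_value: "f s0 t0 = v powr (1/r - 1/p) * u powr (1/r - 1/q)"
    unfolding f_def s0_def t0_def using lhsF_critical_value[OF assms] .
  note strict_max = lhsF_strict_max[OF assms, folded f_def s0_def t0_def]
  have pointwise: "f s t \<le> f s0 t0 \<and> (f s t = f s0 t0 \<longleftrightarrow> s = s0 \<and> t = t0)"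
    if "s > 0" "t > 0" for s t
    using strict_max[OF that] by auto
  have "(SUP st \<in> {st. fst st > 0 \<and> snd st > 0}. f (fst st) (snd st)) = f s0 t0"
  proof (rule cSup_eq_maximum)
    show "f s0 t0 \<in> (\<lambda>st. f (fst st) (snd st)) ` {st. fst st > 0 \<and> snd st > 0}"
      by (rule image_eqI[where x = "(s0, t0)"]) (use assms in \<open>simp_all add: s0_def t0_def\<close>)
  qed (use pointwise in auto)
  then show ?thesis using pointwise unfolding max_value[symmetric] f_def s0_def t0_def by auto
qed

end
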